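(* Let $M$ be a gasket automaton satisfying the $\gamma$-isolated condition with $\mathcal P_{\alpha\gamma}\cup\mathcal P_{\beta\gamma}\ne\emptyset$. Then there exists $(\tau,\kappa)\in\mathcal P_{\alpha\gamma}\cup\mathcal P_{\beta\gamma}$ such that $\kappa$ is double-maximal, i.e. $\kappa$ is both $\alpha\gamma$-maximal and $\beta\gamma$-maximal.
   Context: $\Sigma=\{1,\dots,N\}$. Triangle automaton: $\alpha,\beta,\gamma$ distinct elements of $\Sigma\cup\{-1,-2,-3\}$; states $S_{uv}$ ($u\ne v\in\{\alpha,\beta,\gamma\}$), $Id$, $Exit$; input alphabet $\Sigma^2$; transition $\delta$ with $\delta(Id,(i,j))=Id$ iff $i=j$; $\delta(Id,(i,j))=S_{uv}\Rightarrow\delta(Id,(j,i))=S_{vu}$; $\delta(S_{uv},(i,j))=S_{uv}$ if $(i,j)=(v,u)$, else $Exit$. $\mathcal P_{uv}=\{(i,j):\delta(Id,(i,j))=S_{uv}\}$; $i\triangleleft_{uv}j$ iff $(i,j)\in\mathcal P_{uv}$ (iff $j\triangleleft_{vu}i$); $j$ is $uv$-minimal if no $i\triangleleft_{uv}j$, $uv$-maximal if no $j\triangleleft_{uv}k$, $uv$-isolated if both. Gasket automaton: triangle automaton with (Uniqueness) $i\triangleleft_{uv}j,i\triangleleft_{uv}j'\Rightarrow j=j'$; (Gathering) any two of $a\triangleleft_{\alpha\gamma}c$, $a\triangleleft_{\beta\gamma}b$, $b\triangleleft_{\alpha\beta}c$ imply the third; (Boundary) if $\alpha\in\Sigma$ it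 is $\alpha\gamma$- and $\alpha\beta$-minimal; if $\beta\in\Sigma$ it is $\beta\gamma$- and $\beta\alpha$-minimal; if $\gamma\in\Sigma$ it is $\gamma\alpha$- and $\gamma\beta$-minimal. $\gamma$-isolated condition: $\alpha,\beta,\gamma\in\Sigma$; the directed graph $(\Sigma,\mathcal P_{\alpha\gamma}\cup\mathcal P_{\beta\gamma})$ has no directed cycle; $\gamma$ is $\alpha\gamma$-, $\beta\gamma$- and $\alpha\beta$-isolated. *)

theory Defs
  imports Main
begin

(* Alphabet Sigma = {1..N}, as integers so that the extra labels -1,-2,-3 live in the same type. *)
definition Sig :: "nat \<Rightarrow> int set" where
  "Sig N = {1..int N}"

datatype state = S int int | Id | Exit

definition states :: "int \<Rightarrow> int \<Rightarrow> int \<Rightarrow> state set" where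
  "states \<alpha> \<beta> \<gamma> = {Id, Exit} \<union>
     {S u v | u v. u \<in> {\<alpha>,\<beta>,\<gamma>} \<and> v \<in> {\<alpha>,\<beta>,\<gamma>} \<and> u \<noteq> v}"

definition triangle_automaton ::
  "nat \<Rightarrow> int \<Rightarrow> int \<Rightarrow> int \<Rightarrow> (state \<Rightarrow> int \<times> int \<Rightarrow> state) \<Rightarrow> bool" where
  "triangle_automaton N \<alpha> \<beta> \<gamma> \<delta> \<longleftrightarrow>
     {\<alpha>,\<beta>,\<gamma>} \<subseteq> Sig N \<union> {-1,-2,-3} \<and>
     \<alpha> \<noteq> \<beta> \<and> \<alpha> \<noteq> \<gamma> \<and> \<beta> \<noteq> \<gamma> \<and>
     (\<forall>q\<in>states \<alpha> \<beta> \<gamma>. \<forall>i\<in>Sig N. \<forall>j\<in>Sig N. \<delta> q (i,j) \<in> states \<alpha> \<beta> \<gamma>) \<and>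
     (\<forall>i\<in>Sig N. \<forall>j\<in>Sig N. \<delta> Id (i,j) = Id \<longleftrightarrow> i = j) \<and>
     (\<forall>i\<in>Sig N. \<forall>j\<in>Sig N. \<forall>u v. \<delta> Id (i,j) = S u v \<longrightarrow> \<delta> Id (j,i) = S v u) \<and>
     (\<forall>u\<in>{\<alpha>,\<beta>,\<gamma>}. \<forall>v\<in>{\<alpha>,\<beta>,\<gamma>}. u \<noteq> v \<longrightarrow>
        (\<forall>i\<in>Sig N. \<forall>j\<in>Sig N.
           \<delta> (S u v) (i,j) = (if (i,j) = (v,u) then S u v else Exit)))"

definition P :: "nat \<Rightarrow> (state \<Rightarrow> int \<times> int \<Rightarrow> state) \<Rightarrow> int \<Rightarrow> int \<Rightarrow> (int \<times> int) set" where
  "P N \<delta> u v = {(i,j). i \<in> Sig N \<and> j \<in> Sig N \<and> \<delta> Id (i,j) = S u v}"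

definition is_min :: "nat \<Rightarrow> (state \<Rightarrow> int \<times> int \<Rightarrow> state) \<Rightarrow> int \<Rightarrow> int \<Rightarrow> int \<Rightarrow> bool" where
  "is_min N \<delta> u v j \<longleftrightarrow> \<not> (\<exists>i. (i,j) \<in> P N \<delta> u v)"

definition is_max :: "nat \<Rightarrow> (state \<Rightarrow> int \<times> int \<Rightarrow> state) \<Rightarrow> int \<Rightarrow> int \<Rightarrow> int \<Rightarrow> bool" where
  "is_max N \<delta> u v j \<longleftrightarrow> \<not> (\<exists>k. (j,k) \<in> P N \<delta> u v)"

definition is_isolated :: "nat \<Rightarrow> (state \<Rightarrow> int \<times> int \<Rightarrow> state) \<Rightarrow> int \<Rightarrow> int \<Rightarrow> int \<Rightarrow> bool" where
  "is_isolated N \<delta> u v j \<longleftrightarrow> is_min N \<delta> u v j \<and> is_max N \<delta> u v j"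

definition gasket_automaton ::
  "nat \<Rightarrow> int \<Rightarrow> int \<Rightarrow> int \<Rightarrow> (state \<Rightarrow> int \<times> int \<Rightarrow> state) \<Rightarrow> bool" where
  "gasket_automaton N \<alpha> \<beta> \<gamma> \<delta> \<longleftrightarrow>
     triangle_automaton N \<alpha> \<beta> \<gamma> \<delta> \<and>
     \<comment> \<open>Uniqueness\<close>
     (\<forall>u\<in>{\<alpha>,\<beta>,\<gamma>}. \<forall>v\<in>{\<alpha>,\<beta>,\<gamma>}. u \<noteq> v \<longrightarrow>
        (\<forall>i j j'. (i,j) \<in> P N \<delta> u v \<and> (i,j') \<in> P N \<delta> u v \<longrightarrow> j = j')) \<and>
     \<comment> \<open>Gathering\<close>
     (\<forall>a b c.
        let A = ((a,c) \<in> P N \<delta> \<alpha> \<gamma>); B = ((a,b) \<in> P N \<delta> \<beta> \<gamma>);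
            C = ((b,c) \<in> P N \<delta> \<alpha> \<beta>)
        in (A \<and> B \<longrightarrow> C) \<and> (A \<and> C \<longrightarrow> B) \<and> (B \<and> C \<longrightarrow> A)) \<and>
     \<comment> \<open>Boundary\<close>
     (\<alpha> \<in> Sig N \<longrightarrow> is_min N \<delta> \<alpha> \<gamma> \<alpha> \<and> is_min N \<delta> \<alpha> \<beta> \<alpha>) \<and>
     (\<beta> \<in> Sig N \<longrightarrow> is_min N \<delta> \<beta> \<gamma> \<beta> \<and> is_min N \<delta> \<beta> \<alpha> \<beta>) \<and>
     (\<gamma> \<in> Sig N \<longrightarrow> is_min N \<delta> \<gamma> \<alpha> \<gamma> \<and> is_min N \<delta> \<gamma> \<beta> \<gamma>)"

definition gamma_isolated_cond ::
  "nat \<Rightarrow> int \<Rightarrow> int \<Rightarrow> int \<Rightarrow> (state \<Rightarrow> int \<times> int \<Rightarrow> state) \<Rightarrow> bool" where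
  "gamma_isolated_cond N \<alpha> \<beta> \<gamma> \<delta> \<longleftrightarrow>
     \<alpha> \<in> Sig N \<and> \<beta> \<in> Sig N \<and> \<gamma> \<in> Sig N \<and>
     acyclic (P N \<delta> \<alpha> \<gamma> \<union> P N \<delta> \<beta> \<gamma>) \<and>
     is_isolated N \<delta> \<alpha> \<gamma> \<gamma> \<and> is_isolated N \<delta> \<beta> \<gamma> \<gamma> \<and> is_isolated N \<delta> \<alpha> \<beta> \<gamma>"

end

theory Submission
  imports Defs
begin

(* Following edges of a finite acyclic relation must stop, and the last vertex reached is a
   common sink of both relations. *)

lemma finite_acyclic_ex_edge_to_sink:
  assumes "finite R" and "acyclic R" and "R \<noteq> {}"
  shows "\<exists>(t, k) \<in> R. \<forall>z. (k, z) \<notin> R"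
proof -
  have "wf (R\<inverse>)"
    using assms(1,2) by (rule finite_acyclic_wf_converse)
  moreover have "Range R \<noteq> {}"
    using assms(3) by auto
  ultimately obtain k where k: "k \<in> Range R"
    and no_succ_in_range: "\<And>z. (z, k) \<in> R\<inverse> \<Longrightarrow> z \<notin> Range R"
    by (metis wf_eq_minimal ex_in_conv)
  have "\<forall>z. (k, z) \<notin> R"
    using no_succ_in_range by blast
  with k show ?thesis
    by blast
qed

lemma finite_P: "finite (P N \<delta> u v)"
proof (rule finite_subset)
  show "P N \<delta> u v \<subseteq> Sig N \<times> Sig N"
    unfolding P_def by auto
  show "finite (Sig N \<times> Sig N)"
    unfolding Sig_def by simp
qed

theorem lemma5p2:
  fixes N :: nat and \<alpha> \<beta> \<gamma> :: int and \<delta> :: "state \<Rightarrow> int \<times> int \<Rightarrow> state"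
  assumes "gasket_automaton N \<alpha> \<beta> \<gamma> \<delta>"
    and "gamma_isolated_cond N \<alpha> \<beta> \<gamma> \<delta>"
    and "P N \<delta> \<alpha> \<gamma> \<union> P N \<delta> \<beta> \<gamma> \<noteq> {}"
  shows "\<exists>(\<tau>, \<kappa>) \<in> P N \<delta> \<alpha> \<gamma> \<union> P N \<delta> \<beta> \<gamma>.
           is_max N \<delta> \<alpha> \<gamma> \<kappa> \<and> is_max N \<delta> \<beta> \<gamma> \<kappa>"
proof -
  have "acyclic (P N \<delta> \<alpha> \<gamma> \<union> P N \<delta> \<beta> \<gamma>)"
    using assms(2) unfolding gamma_isolated_cond_def by blast
  with assms(3) have "\<exists>(\<tau>, \<kappa>) \<in> P N \<delta> \<alpha> \<gamma> \<union> P N \<delta> \<beta> \<gamma>.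
                        \<forall>z. (\<kappa>, z) \<notin> P N \<delta> \<alpha> \<gamma> \<union> P N \<delta> \<beta> \<gamma>"
    by (intro finite_acyclic_ex_edge_to_sink) (simp_all add: finite_P)
  then show ?thesis
    unfolding is_max_def by blast
qed

end
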